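(* In a minimum Walrasian equilibrium of a market with unit-demand buyers, every item $j$ with strictly positive price $p_j>0$ has a buyer that supports it.
   Context: Buyer $i$ is unit demand if there are $v_{i,j}\ge0$ with $v_i(S)=\max_{j\in S}v_{i,j}$, $v_i(\emptyset)=0$; utility is quasi-linear. A Walrasian equilibrium is a price vector $p\ge0$ and an allocation $\mathrm{win}$ assigning every item $j$ to a buyer $\mathrm{win}(j)$ such that each buyer's bundle maximizes $v_i(T)-\sum_{j\in T}p_j$ over all bundles $T$. A minimum Walrasian equilibrium is one whose price vector is coordinatewise at most that of every Walrasian equilibrium. Buyer $i$ supports the price of item $j$ if $\mathrm{win}(j)\neq i$ and either (1) there is an item $k$ with $\mathrm{win}(k)=i$ and $v_{i,k}-p_k=v_{i,j}-p_j$, or (2) buyer $i$ receives no item and $v_{i,j}=p_j$. *)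

theory Defs
  imports Complex_Main
begin

definition unit_demand_val :: "('b \<Rightarrow> 'i \<Rightarrow> real) \<Rightarrow> 'b \<Rightarrow> 'i set \<Rightarrow> real" where
  "unit_demand_val v i S = (if S = {} then 0 else Max (v i ` S))"

definition bundle_of :: "('i \<Rightarrow> 'b) \<Rightarrow> 'i set \<Rightarrow> 'b \<Rightarrow> 'i set" where
  "bundle_of win M i = {j \<in> M. win j = i}"

definition utility :: "('b \<Rightarrow> 'i \<Rightarrow> real) \<Rightarrow> ('i \<Rightarrow> real) \<Rightarrow> 'b \<Rightarrow> 'i set \<Rightarrow> real" where
  "utility v p i T = unit_demand_val v i T - (\<Sum>j\<in>T. p j)"

definition walrasian_eq ::
  "'b set \<Rightarrow> 'i set \<Rightarrow> ('b \<Rightarrow> 'i \<Rightarrow> real) \<Rightarrow> ('i \<Rightarrow> real) \<Rightarrow> ('i \<Rightarrow> 'b) \<Rightarrow> bool" where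
  "walrasian_eq B M v p win \<longleftrightarrow>
     (\<forall>j\<in>M. p j \<ge> 0) \<and>
     (\<forall>j\<in>M. win j \<in> B) \<and>
     (\<forall>i\<in>B. \<forall>T\<subseteq>M. utility v p i T \<le> utility v p i (bundle_of win M i))"

definition min_walrasian_eq ::
  "'b set \<Rightarrow> 'i set \<Rightarrow> ('b \<Rightarrow> 'i \<Rightarrow> real) \<Rightarrow> ('i \<Rightarrow> real) \<Rightarrow> ('i \<Rightarrow> 'b) \<Rightarrow> bool" where
  "min_walrasian_eq B M v p win \<longleftrightarrow>
     walrasian_eq B M v p win \<and>
     (\<forall>q win'. walrasian_eq B M v q win' \<longrightarrow> (\<forall>j\<in>M. p j \<le> q j))"

definition supports ::
  "'i set \<Rightarrow> ('b \<Rightarrow> 'i \<Rightarrow> real) \<Rightarrow> ('i \<Rightarrow> real) \<Rightarrow> ('i \<Rightarrow> 'b) \<Rightarrow> 'b \<Rightarrow> 'i \<Rightarrow> bool" where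
  "supports M v p win i j \<longleftrightarrow>
     win j \<noteq> i \<and>
     ((\<exists>k\<in>M. win k = i \<and> v i k - p k = v i j - p j) \<or>
      ((\<forall>k\<in>M. win k \<noteq> i) \<and> v i j = p j))"

end

theory Submission
  imports Defs
begin

text \<open>If no buyer supports item \<open>j\<close>, every buyer other than its winner strictly prefers
  its own bundle to \<open>j\<close>. Lowering \<open>p j\<close> by the smallest of these slacks (and by at most
  \<open>p j\<close>) keeps the same allocation an equilibrium: for a unit-demand buyer a bundle
  containing \<open>j\<close> is worth at most its best item minus the other prices, so it gains
  nothing beyond what the slack absorbs. This contradicts minimality of \<open>p\<close>.\<close>

lemma utility_singleton: "utility v p i {k} = v i k - p k"
  by (simp add: utility_def unit_demand_val_def)

lemma utility_eq_best_item_minus_rest: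
  assumes "finite T" "T \<noteq> {}"
  shows "\<exists>k\<in>T. utility v p i T = v i k - p k - (\<Sum>x\<in>T - {k}. p x)"
proof -
  have "Max (v i ` T) \<in> v i ` T"
    using assms by (intro Max_in) auto
  then obtain k where k: "k \<in> T" "Max (v i ` T) = v i k"
    by auto
  have "sum p T = p k + (\<Sum>x\<in>T - {k}. p x)"
    using assms(1) k(1) by (simp add: sum.remove)
  with k assms(2) show ?thesis
    by (intro bexI[of _ k]) (auto simp: utility_def unit_demand_val_def)
qed

lemma utility_lower_price:
  assumes "finite T"
  shows "utility v (p(j := p j - e)) i T = utility v p i T + (if j \<in> T then e else 0)"
proof -
  have "(\<Sum>x\<in>T. (p(j := p j - e)) x) = (\<Sum>x\<in>T. p x - (if x = j then e else 0))"
    by (intro sum.cong) auto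
  also have "\<dots> = sum p T - (if j \<in> T then e else 0)"
    using assms by (simp add: sum_subtractf sum.delta)
  finally show ?thesis by (simp add: utility_def)
qed

lemma walrasian_eq_utility_ge_singleton:
  assumes "walrasian_eq B M v p win" "i \<in> B" "k \<in> M"
  shows "v i k - p k \<le> utility v p i (bundle_of win M i)"
  using assms utility_singleton[of v p i k] unfolding walrasian_eq_def by force

lemma walrasian_eq_utility_winner:
  assumes "walrasian_eq B M v p win" "finite M" "i \<in> B" "\<exists>k\<in>M. win k = i"
  shows "\<exists>k\<in>M. win k = i \<and> utility v p i (bundle_of win M i) = v i k - p k"
proof -
  let ?S = "bundle_of win M i"
  have fin: "finite ?S" and ne: "?S \<noteq> {}"
    using assms(2,4) by (auto simp: bundle_of_def)
  obtain k' where k': "k' \<in> ?S" "utility v p i ?S = v i k' - p k' - (\<Sum>x\<in>?S - {k'}. p x)"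
    using utility_eq_best_item_minus_rest[OF fin ne, of v p i] by blast
  have "0 \<le> (\<Sum>x\<in>?S - {k'}. p x)"
    using assms(1) by (intro sum_nonneg) (auto simp: walrasian_eq_def bundle_of_def)
  moreover have "v i k' - p k' \<le> utility v p i ?S"
    using walrasian_eq_utility_ge_singleton[OF assms(1,3)] k'(1) by (simp add: bundle_of_def)
  ultimately show ?thesis
    using k' by (auto simp: bundle_of_def)
qed

lemma walrasian_eq_unsupported_slack:
  assumes "walrasian_eq B M v p win" "finite M" "i \<in> B" "j \<in> M" "win j \<noteq> i"
    and "\<not> supports M v p win i j"
  shows "v i j - p j < utility v p i (bundle_of win M i)"
proof -
  have "utility v p i (bundle_of win M i) \<noteq> v i j - p j"
  proof (cases "\<exists>k\<in>M. win k = i")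
    case True
    then show ?thesis
      using walrasian_eq_utility_winner[OF assms(1-3) True] assms(5,6)
      unfolding supports_def by metis
  next
    case False
    then have "bundle_of win M i = {}" by (auto simp: bundle_of_def)
    then show ?thesis
      using False assms(5,6) by (auto simp: supports_def utility_def unit_demand_val_def)
  qed
  with walrasian_eq_utility_ge_singleton[OF assms(1,3,4)] show ?thesis by simp
qed

lemma walrasian_eq_lower_price:
  assumes eq: "walrasian_eq B M v p win" and "finite M" "j \<in> M"
    and eps: "0 \<le> e" "e \<le> p j"
    and slack: "\<And>i. i \<in> B \<Longrightarrow> win j \<noteq> i \<Longrightarrow> v i j - p j + e \<le> utility v p i (bundle_of win M i)"
  shows "walrasian_eq B M v (p(j := p j - e)) win"
  unfolding walrasian_eq_def
proof (intro conjI ballI allI impI)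
  fix x assume "x \<in> M"
  then show "0 \<le> (p(j := p j - e)) x" "win x \<in> B"
    using eq eps unfolding walrasian_eq_def by auto
next
  fix i T assume iB: "i \<in> B" and TM: "T \<subseteq> M"
  let ?S = "bundle_of win M i" and ?q = "p(j := p j - e)"
  have finT: "finite T" and finS: "finite ?S"
    using TM \<open>finite M\<close> finite_subset by (auto simp: bundle_of_def)
  have opt: "utility v p i T \<le> utility v p i ?S"
    using eq iB TM unfolding walrasian_eq_def by blast
  have "utility v p i T + (if j \<in> T then e else 0) \<le> utility v p i ?S + (if j \<in> ?S then e else 0)"
  proof (cases "j \<in> T \<and> j \<notin> ?S")
    case True
    then have winj: "win j \<noteq> i"
      using TM by (auto simp: bundle_of_def)
    obtain k where k: "k \<in> T" "utility v p i T = v i k - p k - (\<Sum>x\<in>T - {k}. p x)"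
      using utility_eq_best_item_minus_rest[OF finT, of v p i] True by blast
    have nonneg: "\<forall>x\<in>T - {k}. 0 \<le> p x"
      using eq TM unfolding walrasian_eq_def by blast
    show ?thesis
    proof (cases "k = j")
      case True
      have "0 \<le> (\<Sum>x\<in>T - {k}. p x)"
        using nonneg by (intro sum_nonneg) blast
      then show ?thesis
        using k True slack[OF iB winj] \<open>j \<in> T \<and> j \<notin> ?S\<close> by simp
    next
      case False
      have "p j \<le> (\<Sum>x\<in>T - {k}. p x)"
        using nonneg False True finT by (intro member_le_sum) auto
      moreover have "v i k - p k \<le> utility v p i ?S"
        using walrasian_eq_utility_ge_singleton[OF eq iB] k(1) TM by blast
      ultimately show ?thesis
        using k eps \<open>j \<in> T \<and> j \<notin> ?S\<close> by simp
    qed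
  next
    case False
    then have "(if j \<in> T then e else 0) \<le> (if j \<in> ?S then e else 0)"
      using eps by auto
    with opt show ?thesis by linarith
  qed
  then show "utility v ?q i T \<le> utility v ?q i ?S"
    by (simp add: utility_lower_price[OF finT] utility_lower_price[OF finS])
qed

theorem mainTheorem8:
  fixes B :: "'b set" and M :: "'i set" and v :: "'b \<Rightarrow> 'i \<Rightarrow> real"
    and p :: "'i \<Rightarrow> real" and win :: "'i \<Rightarrow> 'b"
  assumes "finite B" and "finite M"
    and "\<forall>i\<in>B. \<forall>j\<in>M. v i j \<ge> 0"
    and "min_walrasian_eq B M v p win"
    and "j \<in> M" and "p j > 0"
  shows "\<exists>i\<in>B. supports M v p win i j"
proof (rule ccontr)
  assume unsupported: "\<not> (\<exists>i\<in>B. supports M v p win i j)"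
  have eq: "walrasian_eq B M v p win"
    using assms(4) by (simp add: min_walrasian_eq_def)
  define slack where "slack i = utility v p i (bundle_of win M i) - (v i j - p j)" for i
  define S where "S = insert (p j) (slack ` {i \<in> B. win j \<noteq> i})"
  have finS: "finite S" "S \<noteq> {}"
    using assms(1) by (auto simp: S_def)
  have "\<forall>s\<in>S. 0 < s"
    using walrasian_eq_unsupported_slack[OF eq assms(2) _ assms(5)] unsupported assms(6)
    by (auto simp: S_def slack_def)
  then have pos: "0 < Min S"
    using finS by simp
  have "Min S \<le> p j"
    using finS by (auto simp: S_def)
  moreover have "v i j - p j + Min S \<le> utility v p i (bundle_of win M i)"
    if "i \<in> B" "win j \<noteq> i" for i
  proof -
    have "Min S \<le> slack i"
      using finS that by (auto simp: S_def)
    then show ?thesis by (simp add: slack_def)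
  qed
  ultimately have "walrasian_eq B M v (p(j := p j - Min S)) win"
    using pos by (intro walrasian_eq_lower_price[OF eq assms(2,5)]) auto
  then have "p j \<le> p j - Min S"
    using assms(4,5) unfolding min_walrasian_eq_def by fastforce
  with pos show False by simp
qed

end
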